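(* The function $g:[0,1]\times\mathbb R\to\mathbb R$, $g(s,x):=\xi(t_0(s,x),x)$, is of class $C^2$. Consequently $h(s,x):=\eta(t_0(s,x),x)=w(g(s,x))+s\varphi(g(s,x))$ is also of class $C^2$.
   Context: Let $w\in C^3(\mathbb R)$ be periodic with $w>0$ on $[-1,1]$. Let $-1<a<b<1$ and let $\varphi:[a,b]\to\mathbb R$ be a polynomial with $\varphi^{(k)}(a)=\varphi^{(k)}(b)=0$ for $k=0,1,2,3$, extended by zero outside $[a,b]$. For $x\in\mathbb R$, $(\xi(t,x),\eta(t,x))$ is the unique global solution of $$\frac{d\xi}{dt}=-w'(\xi)\varphi(\xi)-(\eta-w(\xi))\varphi'(\xi),\quad\frac{d\eta}{dt}=\varphi(\xi),\quad \xi(0)=x,\ \eta(0)=w(x).$$ For $s\in[0,1]$, $t_0(s,x)\ge0$ denotes the first time $t\ge0$ with $\eta(t,x)=w(\xi(t,x))+s\varphi(\xi(t,x))$ (this first time exists and satisfies $t_0(s,x)\le s$; $t_0=0$ when $s=0$ or $\varphi(x)=0$). *)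

theory Defs
  imports "HOL-Analysis.Analysis" "HOL-Computational_Algebra.Polynomial"
begin

definition Ck_real :: "nat \<Rightarrow> (real \<Rightarrow> real) \<Rightarrow> bool" where
  "Ck_real k f \<longleftrightarrow> (\<forall>j<k. \<forall>x. ((deriv ^^ j) f) differentiable (at x))
                    \<and> continuous_on UNIV ((deriv ^^ k) f)"

definition C2_on :: "('a::real_normed_vector \<Rightarrow> 'b::real_normed_vector) \<Rightarrow> 'a set \<Rightarrow> bool" where
  "C2_on f S \<longleftrightarrow> (\<exists>f' f''.
      (\<forall>p\<in>S. (f has_derivative blinfun_apply (f' p)) (at p within S)) \<and>
      (\<forall>p\<in>S. (f' has_derivative blinfun_apply (f'' p)) (at p within S)) \<and>
      continuous_on S f'')"

definition first_time ::
  "(real \<Rightarrow> real \<Rightarrow> real) \<Rightarrow> (real \<Rightarrow> real \<Rightarrow> real) \<Rightarrow> (real \<Rightarrow> real) \<Rightarrow> (real \<Rightarrow> real)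
     \<Rightarrow> real \<Rightarrow> real \<Rightarrow> real" where
  "first_time \<xi> \<eta> w \<phi> s x = Inf {t. t \<ge> 0 \<and> \<eta> t x = w (\<xi> t x) + s * \<phi> (\<xi> t x)}"

end

theory Submission
  imports Defs
begin

text \<open>Along a characteristic with \<open>\<phi> x \<noteq> 0\<close>, the level \<open>u = (\<eta> - w \<circ> \<xi>) / (\<phi> \<circ> \<xi>)\<close> satisfies
  \<open>u' = 1 + (w' \<circ> \<xi> + u \<phi>' \<circ> \<xi>)\<^sup>2\<close>, so it increases strictly from \<open>u(0) = 0\<close>; a Gronwall bound keeps
  \<open>\<phi> \<circ> \<xi>\<close> away from zero while \<open>u \<le> 1\<close>, hence \<open>u\<close> reaches every \<open>s \<in> [0,1]\<close> and
  \<open>t\<^sub>0(s,x) = u\<^sup>-\<^sup>1(s)\<close>. Differentiating \<open>\<xi>(u\<^sup>-\<^sup>1(s), x)\<close> shows that \<open>g(\<cdot>, x)\<close> solves the scalar ODE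
  \<open>\<partial>\<^sub>s g = -\<phi>(g) A / (1 + A\<^sup>2)\<close> with \<open>A = w'(g) + s \<phi>'(g)\<close> and \<open>g(0, x) = x\<close> (trivially so when
  \<open>\<phi> x = 0\<close>). This vector field is \<open>C\<^sup>1\<close>, its \<open>v\<close>-derivative is \<open>C\<^sup>1\<close> in \<open>v\<close>, and it is supported in
  \<open>[a,b]\<close>; the flow of such an equation is \<open>C\<^sup>2\<close> in \<open>(s, x)\<close>, its \<open>x\<close>-derivative being
  \<open>exp \<integral>\<^sub>0\<^sup>s F\<^sub>v\<close> by a Gronwall estimate of the linearisation error. Finally \<open>h = w \<circ> g + s \<phi> \<circ> g\<close>
  is \<open>C\<^sup>2\<close> by the chain rule.\<close>

section \<open>\<open>C\<^sup>1\<close> functions on subsets of the plane via partial derivatives\<close>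

definition C1_partials_on ::
  "(real \<times> real) set \<Rightarrow> (real \<times> real \<Rightarrow> real) \<Rightarrow> (real \<times> real \<Rightarrow> real) \<Rightarrow> (real \<times> real \<Rightarrow> real) \<Rightarrow> bool"
  where "C1_partials_on S f f\<^sub>1 f\<^sub>2 \<longleftrightarrow>
    (\<forall>p\<in>S. (f has_derivative (\<lambda>h. f\<^sub>1 p * fst h + f\<^sub>2 p * snd h)) (at p within S))
    \<and> continuous_on S f\<^sub>1 \<and> continuous_on S f\<^sub>2"

lemma C1_partials_onD:
  "C1_partials_on S f f\<^sub>1 f\<^sub>2 \<Longrightarrow> p \<in> S \<Longrightarrow>
    (f has_derivative (\<lambda>h. f\<^sub>1 p * fst h + f\<^sub>2 p * snd h)) (at p within S)"
  unfolding C1_partials_on_def by blast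

lemma C1_partials_on_imp_continuous_on: "C1_partials_on S f f\<^sub>1 f\<^sub>2 \<Longrightarrow> continuous_on S f"
  unfolding C1_partials_on_def continuous_on_eq_continuous_within
  using has_derivative_continuous by blast

lemma C2_on_if_C1_partials_on:
  assumes f: "C1_partials_on S f f\<^sub>1 f\<^sub>2"
    and f\<^sub>1: "C1_partials_on S f\<^sub>1 f\<^sub>1\<^sub>1 f\<^sub>1\<^sub>2" and f\<^sub>2: "C1_partials_on S f\<^sub>2 f\<^sub>2\<^sub>1 f\<^sub>2\<^sub>2"
  shows "C2_on f S"
proof -
  define L\<^sub>1 :: "(real \<times> real) \<Rightarrow>\<^sub>L real" where "L\<^sub>1 = Blinfun fst"
  define L\<^sub>2 :: "(real \<times> real) \<Rightarrow>\<^sub>L real" where "L\<^sub>2 = Blinfun snd"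
  have L: "blinfun_apply L\<^sub>1 = fst" "blinfun_apply L\<^sub>2 = snd"
    unfolding L\<^sub>1_def L\<^sub>2_def by (simp_all add: bounded_linear_Blinfun_apply bounded_linear_fst bounded_linear_snd)
  define M :: "(real \<times> real \<Rightarrow> real) \<Rightarrow> ((real \<times> real) \<Rightarrow>\<^sub>L real) \<Rightarrow> (real \<times> real) \<Rightarrow>\<^sub>L ((real \<times> real) \<Rightarrow>\<^sub>L real)"
    where "M \<pi> L = Blinfun (\<lambda>h. \<pi> h *\<^sub>R L)" for \<pi> L
  have M: "blinfun_apply (M fst L) = (\<lambda>h. fst h *\<^sub>R L)" "blinfun_apply (M snd L) = (\<lambda>h. snd h *\<^sub>R L)" for L
    unfolding M_def
    by (auto intro!: bounded_linear_Blinfun_apply bounded_linear_compose[OF bounded_linear_scaleR_left]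
        bounded_linear_fst bounded_linear_snd)
  define f' where "f' p = f\<^sub>1 p *\<^sub>R L\<^sub>1 + f\<^sub>2 p *\<^sub>R L\<^sub>2" for p
  define f'' where "f'' p = f\<^sub>1\<^sub>1 p *\<^sub>R M fst L\<^sub>1 + f\<^sub>1\<^sub>2 p *\<^sub>R M snd L\<^sub>1 + f\<^sub>2\<^sub>1 p *\<^sub>R M fst L\<^sub>2 + f\<^sub>2\<^sub>2 p *\<^sub>R M snd L\<^sub>2"
    for p
  have "(f has_derivative blinfun_apply (f' p)) (at p within S)" if p: "p \<in> S" for p
    by (rule has_derivative_eq_rhs[OF C1_partials_onD[OF f p]])
       (simp add: f'_def L blinfun.add_left blinfun.scaleR_left fun_eq_iff)
  moreover have "(f' has_derivative blinfun_apply (f'' p)) (at p within S)" if p: "p \<in> S" for p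
  proof -
    have "(f' has_derivative (\<lambda>h. (f\<^sub>1\<^sub>1 p * fst h + f\<^sub>1\<^sub>2 p * snd h) *\<^sub>R L\<^sub>1
        + (f\<^sub>2\<^sub>1 p * fst h + f\<^sub>2\<^sub>2 p * snd h) *\<^sub>R L\<^sub>2)) (at p within S)"
      unfolding f'_def[abs_def]
      by (intro has_derivative_add has_derivative_scaleR_left C1_partials_onD[OF f\<^sub>1 p] C1_partials_onD[OF f\<^sub>2 p])
    then show ?thesis
      by (rule has_derivative_eq_rhs)
         (simp add: f''_def M blinfun.add_left blinfun.scaleR_left scaleR_add_left fun_eq_iff)
  qed
  moreover have "continuous_on S f''"
    using f\<^sub>1 f\<^sub>2 unfolding f''_def[abs_def] C1_partials_on_def by (intro continuous_intros) auto
  ultimately show ?thesis unfolding C2_on_def by blast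
qed

lemma C1_partials_on_const: "C1_partials_on S (\<lambda>p. c) (\<lambda>p. 0) (\<lambda>p. 0)"
  unfolding C1_partials_on_def by (auto intro!: derivative_eq_intros)

lemma C1_partials_on_fst: "C1_partials_on S fst (\<lambda>p. 1) (\<lambda>p. 0)"
  unfolding C1_partials_on_def by (auto intro!: derivative_eq_intros)

lemma C1_partials_on_add:
  assumes "C1_partials_on S f f\<^sub>1 f\<^sub>2" "C1_partials_on S g g\<^sub>1 g\<^sub>2"
  shows "C1_partials_on S (\<lambda>p. f p + g p) (\<lambda>p. f\<^sub>1 p + g\<^sub>1 p) (\<lambda>p. f\<^sub>2 p + g\<^sub>2 p)"
  using assms unfolding C1_partials_on_def
  by (auto intro!: derivative_eq_intros continuous_intros simp: algebra_simps)

lemma C1_partials_on_mult: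
  assumes f: "C1_partials_on S f f\<^sub>1 f\<^sub>2" and g: "C1_partials_on S g g\<^sub>1 g\<^sub>2"
  shows "C1_partials_on S (\<lambda>p. f p * g p)
           (\<lambda>p. f\<^sub>1 p * g p + f p * g\<^sub>1 p) (\<lambda>p. f\<^sub>2 p * g p + f p * g\<^sub>2 p)"
proof -
  have "((\<lambda>p. f p * g p) has_derivative
      (\<lambda>h. (f\<^sub>1 p * g p + f p * g\<^sub>1 p) * fst h + (f\<^sub>2 p * g p + f p * g\<^sub>2 p) * snd h)) (at p within S)"
    if p: "p \<in> S" for p
    by (rule has_derivative_eq_rhs[OF has_derivative_mult[OF C1_partials_onD[OF f p] C1_partials_onD[OF g p]]])
       (auto simp: fun_eq_iff algebra_simps)
  moreover have "continuous_on S (\<lambda>p. f\<^sub>1 p * g p + f p * g\<^sub>1 p)"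
    "continuous_on S (\<lambda>p. f\<^sub>2 p * g p + f p * g\<^sub>2 p)"
    using f g C1_partials_on_imp_continuous_on[OF f] C1_partials_on_imp_continuous_on[OF g]
    unfolding C1_partials_on_def by (auto intro!: continuous_intros)
  ultimately show ?thesis unfolding C1_partials_on_def by blast
qed

lemma C1_partials_on_compose:
  assumes k: "\<And>y. (k has_real_derivative k' y) (at y)" and k': "continuous_on UNIV k'"
    and f: "C1_partials_on S f f\<^sub>1 f\<^sub>2"
  shows "C1_partials_on S (\<lambda>p. k (f p)) (\<lambda>p. k' (f p) * f\<^sub>1 p) (\<lambda>p. k' (f p) * f\<^sub>2 p)"
proof -
  have "((\<lambda>p. k (f p)) has_derivative (\<lambda>h. k' (f p) * f\<^sub>1 p * fst h + k' (f p) * f\<^sub>2 p * snd h))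
      (at p within S)" if p: "p \<in> S" for p
    using has_derivative_compose[OF C1_partials_onD[OF f p] k[of "f p", unfolded has_field_derivative_def]]
    by (simp add: algebra_simps)
  moreover have "continuous_on S (\<lambda>p. k' (f p) * f\<^sub>1 p)" "continuous_on S (\<lambda>p. k' (f p) * f\<^sub>2 p)"
    using f C1_partials_on_imp_continuous_on[OF f] unfolding C1_partials_on_def
    by (auto intro!: continuous_intros continuous_on_compose2[OF k'])
  ultimately show ?thesis unfolding C1_partials_on_def by blast
qed

lemma C1_partials_on_cong:
  assumes "C1_partials_on S f f\<^sub>1 f\<^sub>2" "\<And>p. p \<in> S \<Longrightarrow> g p = f p"
  shows "C1_partials_on S g f\<^sub>1 f\<^sub>2"
  using assms unfolding C1_partials_on_def by (auto intro: has_derivative_transform_within[where d=1])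

abbreviation strip :: "(real \<times> real) set" where "strip \<equiv> {0..1} \<times> UNIV"

lemma continuous_on_strip_if_lipschitz_fst:
  assumes B: "B \<ge> 0"
    and lip: "\<And>s s' x. s \<in> {0..1} \<Longrightarrow> s' \<in> {0..1} \<Longrightarrow> \<bar>f (s', x) - f (s, x)\<bar> \<le> B * \<bar>s' - s\<bar>"
    and cont: "\<And>s. s \<in> {0..1} \<Longrightarrow> continuous_on UNIV (\<lambda>x. f (s, x))"
  shows "continuous_on strip f"
  unfolding continuous_on_iff
proof (intro ballI allI impI)
  fix p e assume p: "p \<in> strip" and e: "(e::real) > 0"
  obtain s x where px: "p = (s, x)" and s: "s \<in> {0..1}" using p by auto
  obtain d where d: "d > 0" "\<And>x'. dist x' x < d \<Longrightarrow> dist (f (s, x')) (f (s, x)) < e/2"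
    using cont[OF s] e unfolding continuous_on_iff by (metis UNIV_I half_gt_zero)
  show "\<exists>d>0. \<forall>q\<in>strip. dist q p < d \<longrightarrow> dist (f q) (f p) < e"
  proof (intro exI[of _ "min d (e / (2 * (B + 1)))"] conjI ballI impI)
    show "min d (e / (2 * (B + 1))) > 0" using d e B by simp
    fix q assume q: "q \<in> strip" and dq: "dist q p < min d (e / (2 * (B + 1)))"
    obtain s' x' where qx: "q = (s', x')" and s': "s' \<in> {0..1}" using q by auto
    have "\<bar>s' - s\<bar> < e / (2 * (B + 1))" "dist x' x < d"
      using dq dist_fst_le[of q p] dist_snd_le[of q p] by (auto simp: px qx dist_real_def)
    then have "(B + 1) * \<bar>s' - s\<bar> \<le> e/2" and "\<bar>f (s, x') - f (s, x)\<bar> < e/2"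
      using B d(2)[of x'] by (auto simp: dist_real_def field_simps)
    moreover have "B * \<bar>s' - s\<bar> \<le> (B + 1) * \<bar>s' - s\<bar>" by (simp add: algebra_simps)
    ultimately show "dist (f q) (f p) < e"
      using lip[OF s s', of x'] unfolding px qx dist_real_def by linarith
  qed
qed

lemma time_increment_bound:
  assumes ds: "\<And>\<sigma>. \<sigma> \<in> {0..1} \<Longrightarrow> ((\<lambda>\<sigma>. f (\<sigma>, x')) has_real_derivative f\<^sub>s (\<sigma>, x')) (at \<sigma> within {0..1})"
    and s: "s \<in> {0..1}" "s' \<in> {0..1}"
    and close: "\<And>\<sigma>. \<sigma> \<in> {min s s'..max s s'} \<Longrightarrow> \<bar>f\<^sub>s (\<sigma>, x') - c\<bar> \<le> \<epsilon>"
  shows "\<bar>f (s', x') - f (s, x') - c * (s' - s)\<bar> \<le> \<epsilon> * \<bar>s' - s\<bar>"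
proof -
  have sub: "{min s s'..max s s'} \<subseteq> {0..1}" using s by auto
  have "((\<lambda>\<sigma>. f (\<sigma>, x') - c * \<sigma>) has_real_derivative f\<^sub>s (\<sigma>, x') - c) (at \<sigma> within {min s s'..max s s'})"
    if "\<sigma> \<in> {min s s'..max s s'}" for \<sigma>
    using that sub by (auto intro!: derivative_eq_intros has_field_derivative_subset[OF ds])
  then have "norm ((f (s', x') - c * s') - (f (s, x') - c * s)) \<le> \<epsilon> * norm (s' - s)"
    by (intro field_differentiable_bound[where S="{min s s'..max s s'}"]) (auto simp: close)
  then show ?thesis by (simp add: algebra_simps)
qed

lemma C1_partials_on_strip:
  assumes ds: "\<And>s x. s \<in> {0..1} \<Longrightarrow> ((\<lambda>s. f (s, x)) has_real_derivative f\<^sub>s (s, x)) (at s within {0..1})"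
    and dx: "\<And>s x. s \<in> {0..1} \<Longrightarrow> ((\<lambda>x. f (s, x)) has_real_derivative f\<^sub>x (s, x)) (at x)"
    and cs: "continuous_on strip f\<^sub>s" and cx: "continuous_on strip f\<^sub>x"
  shows "C1_partials_on strip f f\<^sub>s f\<^sub>x"
proof -
  have "(f has_derivative (\<lambda>h. f\<^sub>s p * fst h + f\<^sub>x p * snd h)) (at p within strip)" if p: "p \<in> strip" for p
  proof -
    obtain s x where px: "p = (s, x)" and s: "s \<in> {0..1}" using p by auto
    have bl: "bounded_linear (\<lambda>h::real \<times> real. f\<^sub>s p * fst h + f\<^sub>x p * snd h)"
      by (intro bounded_linear_add bounded_linear_compose[OF bounded_linear_mult_right]
          bounded_linear_fst bounded_linear_snd)
    show ?thesis unfolding has_derivative_within_alt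
    proof (intro conjI bl allI impI)
      fix e :: real assume e: "e > 0"
      obtain d\<^sub>1 where d\<^sub>1: "d\<^sub>1 > 0" "\<And>q. q \<in> strip \<Longrightarrow> dist q p < d\<^sub>1 \<Longrightarrow> dist (f\<^sub>s q) (f\<^sub>s p) < e/2"
        using cs p e unfolding continuous_on_iff by (metis half_gt_zero)
      have "((\<lambda>x. f (s, x)) has_derivative (*) (f\<^sub>x (s, x))) (at x within UNIV)"
        using dx[OF s, of x] by (simp add: has_field_derivative_def)
      then obtain d\<^sub>2 where d\<^sub>2: "d\<^sub>2 > 0" "\<And>x'. norm (x' - x) < d\<^sub>2 \<Longrightarrow>
          norm (f (s, x') - f (s, x) - f\<^sub>x (s, x) * (x' - x)) \<le> e/2 * norm (x' - x)"
        unfolding has_derivative_within_alt using e by (metis UNIV_I half_gt_zero)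
      show "\<exists>d>0. \<forall>q\<in>strip. norm (q - p) < d \<longrightarrow>
              norm (f q - f p - (f\<^sub>s p * fst (q - p) + f\<^sub>x p * snd (q - p))) \<le> e * norm (q - p)"
      proof (intro exI[of _ "min d\<^sub>1 d\<^sub>2"] conjI ballI impI)
        show "min d\<^sub>1 d\<^sub>2 > 0" using d\<^sub>1 d\<^sub>2 by simp
        fix q assume q: "q \<in> strip" and nq: "norm (q - p) < min d\<^sub>1 d\<^sub>2"
        obtain s' x' where qx: "q = (s', x')" and s': "s' \<in> {0..1}" using q by auto
        have hs: "\<bar>s' - s\<bar> \<le> norm (q - p)" and hx: "\<bar>x' - x\<bar> \<le> norm (q - p)"
          using norm_fst_le[of "s' - s" "x' - x"] norm_snd_le[of "x' - x" "s' - s"]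
          by (simp_all add: px qx)
        have "\<bar>f\<^sub>s (\<sigma>, x') - f\<^sub>s (s, x)\<bar> \<le> e/2" if \<sigma>: "\<sigma> \<in> {min s s'..max s s'}" for \<sigma>
        proof -
          have "dist \<sigma> s \<le> dist s' s"
            using \<sigma> unfolding dist_real_def by (simp add: abs_le_iff min_def max_def split: if_splits)
          then have "dist (\<sigma>, x') (s, x) \<le> dist (s', x') (s, x)"
            unfolding dist_Pair_Pair by (intro real_sqrt_le_mono add_right_mono power_mono) simp_all
          then have "dist (\<sigma>, x') p < d\<^sub>1" using nq by (simp add: px qx dist_norm)
          moreover have "(\<sigma>, x') \<in> strip" using \<sigma> s s' by auto
          ultimately show ?thesis using d\<^sub>1(2)[of "(\<sigma>, x')"] by (simp add: dist_real_def px)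
        qed
        then have A: "\<bar>f (s', x') - f (s, x') - f\<^sub>s (s, x) * (s' - s)\<bar> \<le> e/2 * \<bar>s' - s\<bar>"
          by (intro time_increment_bound[OF ds s s'])
        have B: "\<bar>f (s, x') - f (s, x) - f\<^sub>x (s, x) * (x' - x)\<bar> \<le> e/2 * \<bar>x' - x\<bar>"
          using d\<^sub>2(2)[of x'] hx nq by simp
        have "norm (f q - f p - (f\<^sub>s p * fst (q - p) + f\<^sub>x p * snd (q - p)))
            = \<bar>(f (s', x') - f (s, x') - f\<^sub>s (s, x) * (s' - s)) + (f (s, x') - f (s, x) - f\<^sub>x (s, x) * (x' - x))\<bar>"
          unfolding px qx by (simp add: algebra_simps)
        also have "\<dots> \<le> e/2 * \<bar>s' - s\<bar> + e/2 * \<bar>x' - x\<bar>"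
          by (rule order_trans[OF abs_triangle_ineq add_mono[OF A B]])
        also have "\<dots> \<le> e/2 * norm (q - p) + e/2 * norm (q - p)"
          using hs hx e by (intro add_mono mult_left_mono) auto
        finally show "norm (f q - f p - (f\<^sub>s p * fst (q - p) + f\<^sub>x p * snd (q - p))) \<le> e * norm (q - p)"
          by simp
      qed
    qed
  qed
  then show ?thesis using cs cx unfolding C1_partials_on_def by blast
qed

section \<open>Flows of scalar ODEs\<close>

lemma nonpos_derivative_within_imp_le:
  fixes V V' :: "real \<Rightarrow> real"
  assumes der: "\<And>t. t \<in> {0..1} \<Longrightarrow> (V has_real_derivative V' t) (at t within {0..1})"
    and nonpos: "\<And>t. t \<in> {0..1} \<Longrightarrow> V' t \<le> 0" and s: "s \<in> {0..1}"
  shows "V s \<le> V 0"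
proof -
  have "\<exists>c\<in>{0..s}. V s - V 0 = V' c * (s - 0)"
    using s by (intro mvt_very_simple)
      (auto intro!: has_field_derivative_subset[OF der, unfolded has_field_derivative_def, THEN has_derivative_eq_rhs]
        simp: fun_eq_iff mult.commute)
  then obtain c where "c \<in> {0..s}" "V s - V 0 = V' c * s" by auto
  moreover have "V' c * s \<le> 0" using nonpos[of c] \<open>c \<in> {0..s}\<close> s by (intro mult_nonpos_nonneg) auto
  ultimately show ?thesis by simp
qed

lemma has_real_derivative_if_quadratic_remainder:
  fixes f :: "real \<Rightarrow> real"
  assumes C: "C \<ge> 0" and rem: "\<And>x'. \<bar>f x' - f x - D * (x' - x)\<bar> \<le> C * (x' - x)\<^sup>2"
  shows "(f has_real_derivative D) (at x)"
  unfolding has_field_derivative_def has_derivative_within_alt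
proof (intro conjI allI impI bounded_linear_mult_right)
  fix e :: real assume e: "e > 0"
  show "\<exists>d>0. \<forall>y\<in>UNIV. norm (y - x) < d \<longrightarrow> norm (f y - f x - D * (y - x)) \<le> e * norm (y - x)"
  proof (intro exI[of _ "e / (C + 1)"] conjI ballI impI)
    show "e / (C + 1) > 0" using e C by simp
    fix y :: real assume "norm (y - x) < e / (C + 1)"
    then have h: "\<bar>y - x\<bar> * (C + 1) \<le> e" using C by (simp add: field_simps)
    have "\<bar>f y - f x - D * (y - x)\<bar> \<le> (C * \<bar>y - x\<bar>) * \<bar>y - x\<bar>"
      using rem[of y] by (simp add: power2_eq_square abs_mult_self_eq)
    also have "\<dots> \<le> e * \<bar>y - x\<bar>"
      using h C by (intro mult_right_mono) (auto simp: algebra_simps)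
    finally show "norm (f y - f x - D * (y - x)) \<le> e * norm (y - x)" by simp
  qed
qed

lemma continuous_on_compose_curried:
  assumes "continuous_on UNIV (\<lambda>p. G (fst p) (snd p))" "continuous_on S A" "continuous_on S B"
  shows "continuous_on S (\<lambda>p. G (A p) (B p))"
  using continuous_on_compose2[OF assms(1) continuous_on_Pair[OF assms(2,3)]] by simp

locale scalar_flow =
  fixes F F\<^sub>s F\<^sub>v F\<^sub>v\<^sub>v :: "real \<Rightarrow> real \<Rightarrow> real" and y :: "real \<Rightarrow> real \<Rightarrow> real" and M L K :: real
  assumes F_has_derivative:
      "\<And>s v. ((\<lambda>p. F (fst p) (snd p)) has_derivative (\<lambda>h. F\<^sub>s s v * fst h + F\<^sub>v s v * snd h)) (at (s, v))"
    and F\<^sub>v_has_derivative: "\<And>s v. ((\<lambda>v. F\<^sub>v s v) has_real_derivative F\<^sub>v\<^sub>v s v) (at v)"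
    and continuous_F\<^sub>s: "continuous_on UNIV (\<lambda>p. F\<^sub>s (fst p) (snd p))"
    and continuous_F\<^sub>v: "continuous_on UNIV (\<lambda>p. F\<^sub>v (fst p) (snd p))"
    and continuous_F\<^sub>v\<^sub>v: "continuous_on UNIV (\<lambda>p. F\<^sub>v\<^sub>v (fst p) (snd p))"
    and F_bound: "\<And>s v. s \<in> {0..1} \<Longrightarrow> \<bar>F s v\<bar> \<le> M"
    and F\<^sub>v_bound: "\<And>s v. s \<in> {0..1} \<Longrightarrow> \<bar>F\<^sub>v s v\<bar> \<le> L"
    and F\<^sub>v\<^sub>v_bound: "\<And>s v. s \<in> {0..1} \<Longrightarrow> \<bar>F\<^sub>v\<^sub>v s v\<bar> \<le> K"
    and flow_has_derivative_s:
      "\<And>s x. s \<in> {0..1} \<Longrightarrow> ((\<lambda>s. y s x) has_real_derivative F s (y s x)) (at s within {0..1})"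
    and flow_0: "\<And>x. y 0 x = x"
begin

lemma bounds_nonneg: "M \<ge> 0" "L \<ge> 0" "K \<ge> 0"
  using F_bound[of 0 0] F\<^sub>v_bound[of 0 0] F\<^sub>v\<^sub>v_bound[of 0 0] by auto

lemma continuous_F: "continuous_on UNIV (\<lambda>p. F (fst p) (snd p))"
proof (rule continuous_at_imp_continuous_on, clarify)
  show "isCont (\<lambda>p. F (fst p) (snd p)) (s, v)" for s v
    by (rule has_derivative_continuous[OF F_has_derivative])
qed

lemma F_has_derivative_v: "((\<lambda>v. F s v) has_real_derivative F\<^sub>v s v) (at v)"
  using has_derivative_compose[OF has_derivative_Pair[OF has_derivative_const has_derivative_ident]
      F_has_derivative[of s v]]
  by (simp add: has_field_derivative_def)

lemma F_lipschitz: "s \<in> {0..1} \<Longrightarrow> \<bar>F s v' - F s v\<bar> \<le> L * \<bar>v' - v\<bar>"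
  using field_differentiable_bound[of UNIV "\<lambda>v. F s v" "\<lambda>v. F\<^sub>v s v" L v' v] F_has_derivative_v F\<^sub>v_bound
  by (auto intro: has_field_derivative_at_within)

lemma F\<^sub>v_lipschitz: "s \<in> {0..1} \<Longrightarrow> \<bar>F\<^sub>v s v' - F\<^sub>v s v\<bar> \<le> K * \<bar>v' - v\<bar>"
  using field_differentiable_bound[of UNIV "\<lambda>v. F\<^sub>v s v" "\<lambda>v. F\<^sub>v\<^sub>v s v" K v' v] F\<^sub>v_has_derivative F\<^sub>v\<^sub>v_bound
  by (auto intro: has_field_derivative_at_within)

lemma F_taylor_remainder:
  assumes s: "s \<in> {0..1}"
  shows "\<bar>F s v' - F s v - F\<^sub>v s v * (v' - v)\<bar> \<le> K * (v' - v)\<^sup>2"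
proof -
  let ?T = "{min v v'..max v v'}"
  have "((\<lambda>u. F s u - F\<^sub>v s v * u) has_real_derivative (F\<^sub>v s u - F\<^sub>v s v)) (at u within ?T)" for u
    by (auto intro!: derivative_eq_intros has_field_derivative_at_within[OF F_has_derivative_v])
  moreover have "norm (F\<^sub>v s u - F\<^sub>v s v) \<le> K * \<bar>v' - v\<bar>" if "u \<in> ?T" for u
  proof -
    have "\<bar>u - v\<bar> \<le> \<bar>v' - v\<bar>"
      using that by (simp add: abs_le_iff min_def max_def split: if_splits)
    then show ?thesis
      using F\<^sub>v_lipschitz[OF s, of u v] mult_left_mono[of "\<bar>u - v\<bar>" "\<bar>v' - v\<bar>" K] bounds_nonneg by simp
  qed
  ultimately have "norm ((F s v' - F\<^sub>v s v * v') - (F s v - F\<^sub>v s v * v)) \<le> K * \<bar>v' - v\<bar> * norm (v' - v)"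
    by (intro field_differentiable_bound[where S = ?T]) auto
  then show ?thesis by (simp add: algebra_simps power2_eq_square abs_mult_self_eq)
qed

lemma flow_continuous_s: "continuous_on {0..1} (\<lambda>s. y s x)"
  by (rule DERIV_continuous_on[OF flow_has_derivative_s])

lemma flow_lipschitz_s: "s \<in> {0..1} \<Longrightarrow> s' \<in> {0..1} \<Longrightarrow> \<bar>y s' x - y s x\<bar> \<le> M * \<bar>s' - s\<bar>"
  using field_differentiable_bound[of "{0..1}" "\<lambda>s. y s x" "\<lambda>s. F s (y s x)" M s' s]
    flow_has_derivative_s F_bound
  by auto

text \<open>Gronwall: \<open>(y s x' - y s x)\<^sup>2 e\<^sup>-\<^sup>2\<^sup>L\<^sup>s\<close> is nonincreasing.\<close>
lemma flow_lipschitz_x: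
  assumes s: "s \<in> {0..1}"
  shows "\<bar>y s x' - y s x\<bar> \<le> exp L * \<bar>x' - x\<bar>"
proof -
  define \<delta> where "\<delta> t = y t x' - y t x" for t
  define V where "V t = (\<delta> t)\<^sup>2 * exp (- 2 * L * t)" for t
  define V' where "V' t = (2 * (\<delta> t * (F t (y t x') - F t (y t x))) - 2 * L * (\<delta> t)\<^sup>2) * exp (- 2 * L * t)"
    for t
  have "(V has_real_derivative V' t) (at t within {0..1})" if "t \<in> {0..1}" for t
    unfolding V_def[abs_def] V'_def \<delta>_def
    by (rule derivative_eq_intros flow_has_derivative_s that refl | simp add: algebra_simps power2_eq_square)+
  moreover have "V' t \<le> 0" if t: "t \<in> {0..1}" for t
  proof -
    have "\<delta> t * (F t (y t x') - F t (y t x)) \<le> \<bar>\<delta> t\<bar> * \<bar>F t (y t x') - F t (y t x)\<bar>"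
      by (metis abs_ge_self abs_mult)
    also have "\<dots> \<le> \<bar>\<delta> t\<bar> * (L * \<bar>\<delta> t\<bar>)"
      unfolding \<delta>_def by (intro mult_left_mono F_lipschitz t) auto
    finally have "\<delta> t * (F t (y t x') - F t (y t x)) \<le> L * (\<delta> t)\<^sup>2"
      by (simp add: power2_eq_square abs_mult_self_eq mult_ac)
    then show ?thesis
      unfolding V'_def by (intro mult_nonpos_nonneg) auto
  qed
  ultimately have "V s \<le> V 0" by (rule nonpos_derivative_within_imp_le[OF _ _ s])
  then have "(\<delta> s)\<^sup>2 \<le> (x' - x)\<^sup>2 * exp (2 * L * s)"
    by (simp add: V_def \<delta>_def flow_0 exp_minus field_simps)
  also have "\<dots> \<le> (x' - x)\<^sup>2 * exp (2 * L)"
    using s bounds_nonneg by (intro mult_left_mono) (auto simp: mult_left_le)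
  also have "\<dots> = (exp L * \<bar>x' - x\<bar>)\<^sup>2"
    by (simp add: power2_eq_square abs_mult_self_eq mult_ac flip: exp_add)
  finally have "\<bar>\<delta> s\<bar>\<^sup>2 \<le> (exp L * \<bar>x' - x\<bar>)\<^sup>2" by simp
  then show ?thesis unfolding \<delta>_def by (rule power2_le_imp_le) simp
qed

lemma flow_continuous_x: "s \<in> {0..1} \<Longrightarrow> continuous_on UNIV (\<lambda>x. y s x)"
proof -
  assume "s \<in> {0..1}"
  then have "(exp L)-lipschitz_on UNIV (\<lambda>x. y s x)"
    by (intro lipschitz_onI) (auto simp: dist_real_def flow_lipschitz_x)
  then show ?thesis by (rule lipschitz_on_continuous_on)
qed

lemma flow_continuous: "continuous_on strip (\<lambda>p. y (fst p) (snd p))"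
  by (rule continuous_on_strip_if_lipschitz_fst[of M]) (auto simp: bounds_nonneg flow_lipschitz_s flow_continuous_x)

lemma continuous_on_flow_swapped: "s \<le> 1 \<Longrightarrow> continuous_on (UNIV \<times> {0..s}) (\<lambda>p. y (snd p) (fst p))"
  by (rule continuous_on_compose2[OF flow_continuous, of _ "\<lambda>p. (snd p, fst p)", simplified])
     (auto intro!: continuous_intros)

lemma continuous_F\<^sub>v_along_flow: "continuous_on {0..1} (\<lambda>\<sigma>. F\<^sub>v \<sigma> (y \<sigma> x))"
  by (rule continuous_on_compose_curried[OF continuous_F\<^sub>v]) (auto intro: continuous_intros flow_continuous_s)

text \<open>\<open>\<partial>\<^sub>x y = exp (\<integral>\<^sub>0\<^sup>s F\<^sub>v \<sigma> (y \<sigma> x) d\<sigma>)\<close> is the solution of the variational equation.\<close>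
definition var_exponent :: "real \<Rightarrow> real \<Rightarrow> real"
  where "var_exponent s x = integral {0..s} (\<lambda>\<sigma>. F\<^sub>v \<sigma> (y \<sigma> x))"

definition variation :: "real \<Rightarrow> real \<Rightarrow> real"
  where "variation s x = exp (var_exponent s x)"

lemma var_exponent_has_derivative_s:
  "s \<in> {0..1} \<Longrightarrow> ((\<lambda>s. var_exponent s x) has_real_derivative F\<^sub>v s (y s x)) (at s within {0..1})"
  unfolding var_exponent_def by (rule integral_has_real_derivative[OF continuous_F\<^sub>v_along_flow])

lemma var_exponent_bound: "s \<in> {0..1} \<Longrightarrow> \<bar>var_exponent s x\<bar> \<le> L"
  using integral_bound[of 0 s "\<lambda>\<sigma>. F\<^sub>v \<sigma> (y \<sigma> x)" L] continuous_on_subset[OF continuous_F\<^sub>v_along_flow]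
    F\<^sub>v_bound bounds_nonneg
  unfolding var_exponent_def by (auto simp: mult_left_le intro: order_trans)

lemma variation_0: "variation 0 x = 1"
  by (simp add: variation_def var_exponent_def)

lemma variation_bound: "s \<in> {0..1} \<Longrightarrow> \<bar>variation s x\<bar> \<le> exp L"
  using var_exponent_bound[of s x] by (simp add: variation_def)

lemma variation_has_derivative_s:
  "s \<in> {0..1} \<Longrightarrow> ((\<lambda>s. variation s x) has_real_derivative F\<^sub>v s (y s x) * variation s x) (at s within {0..1})"
  unfolding variation_def by (auto intro!: derivative_eq_intros var_exponent_has_derivative_s)

text \<open>The linearisation error, divided by the variation, has derivative
  \<open>(F s (y s x') - F s (y s x) - F\<^sub>v s (y s x) (y s x' - y s x)) e\<^sup>-\<^sup>I\<close>, which is quadratically small.\<close>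
lemma flow_linearisation_error:
  assumes s: "s \<in> {0..1}"
  shows "\<bar>y s x' - y s x - variation s x * (x' - x)\<bar> \<le> K * exp L ^ 4 * (x' - x)\<^sup>2"
proof -
  define B where "B = K * (exp L * \<bar>x' - x\<bar>)\<^sup>2 * exp L"
  define v where "v t = (y t x' - y t x - (x' - x) * variation t x) * exp (- var_exponent t x)" for t
  define v' where "v' t = (F t (y t x') - F t (y t x) - F\<^sub>v t (y t x) * (y t x' - y t x)) * exp (- var_exponent t x)"
    for t
  have "(v has_real_derivative v' t) (at t within {0..1})" if "t \<in> {0..1}" for t
    unfolding v_def[abs_def] v'_def
    by (rule derivative_eq_intros flow_has_derivative_s variation_has_derivative_s
          var_exponent_has_derivative_s that refl | simp add: algebra_simps)+
  moreover have "norm (v' t) \<le> B" if t: "t \<in> {0..1}" for t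
  proof -
    have "\<bar>y t x' - y t x\<bar>\<^sup>2 \<le> (exp L * \<bar>x' - x\<bar>)\<^sup>2"
      using flow_lipschitz_x[OF t] by (intro power_mono) auto
    then have "K * (y t x' - y t x)\<^sup>2 \<le> K * (exp L * \<bar>x' - x\<bar>)\<^sup>2"
      using bounds_nonneg by (intro mult_left_mono) auto
    with F_taylor_remainder[OF t]
    have "\<bar>F t (y t x') - F t (y t x) - F\<^sub>v t (y t x) * (y t x' - y t x)\<bar> \<le> K * (exp L * \<bar>x' - x\<bar>)\<^sup>2"
      by (rule order_trans)
    moreover have "exp (- var_exponent t x) \<le> exp L" using var_exponent_bound[OF t, of x] by simp
    ultimately show ?thesis
      unfolding v'_def B_def real_norm_def abs_mult abs_exp_cancel by (intro mult_mono) auto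
  qed
  ultimately have "norm (v s - v 0) \<le> B * norm (s - 0)"
    by (intro field_differentiable_bound[of "{0..1}"]) (use s in auto)
  also have "\<dots> \<le> B" using s bounds_nonneg by (simp add: B_def mult_left_le)
  finally have "\<bar>v s\<bar> \<le> B" by (simp add: v_def flow_0 variation_0)
  then have "\<bar>v s\<bar> * exp (var_exponent s x) \<le> B * exp L"
    using var_exponent_bound[OF s, of x] by (intro mult_mono) auto
  moreover have "\<bar>y s x' - y s x - variation s x * (x' - x)\<bar> = \<bar>v s\<bar> * exp (var_exponent s x)"
    by (simp add: v_def variation_def abs_mult exp_minus field_simps)
  moreover have "B * exp L = K * exp L ^ 4 * (x' - x)\<^sup>2"
    by (simp add: B_def power2_eq_square abs_mult_self_eq eval_nat_numeral mult_ac)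
  ultimately show ?thesis by simp
qed

lemma flow_has_derivative_x: "s \<in> {0..1} \<Longrightarrow> ((\<lambda>x. y s x) has_real_derivative variation s x) (at x)"
  by (rule has_real_derivative_if_quadratic_remainder[OF _ flow_linearisation_error])
     (use bounds_nonneg in auto)

lemma var_exponent_lipschitz_s:
  "s \<in> {0..1} \<Longrightarrow> s' \<in> {0..1} \<Longrightarrow> \<bar>var_exponent s' x - var_exponent s x\<bar> \<le> L * \<bar>s' - s\<bar>"
  using field_differentiable_bound[of "{0..1}" "\<lambda>s. var_exponent s x" "\<lambda>s. F\<^sub>v s (y s x)" L s' s]
    var_exponent_has_derivative_s F\<^sub>v_bound
  by auto

lemma var_exponent_continuous_x: "s \<in> {0..1} \<Longrightarrow> continuous_on UNIV (\<lambda>x. var_exponent s x)"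
  unfolding var_exponent_def
  by (rule integral_continuous_on_param[of UNIV 0 s "\<lambda>x t. F\<^sub>v t (y t x)", unfolded cbox_interval])
     (auto simp: split_beta intro!: continuous_on_compose_curried[OF continuous_F\<^sub>v]
        continuous_intros continuous_on_flow_swapped)

lemma variation_continuous: "continuous_on strip (\<lambda>p. variation (fst p) (snd p))"
proof -
  have "continuous_on strip (\<lambda>p. var_exponent (fst p) (snd p))"
    by (rule continuous_on_strip_if_lipschitz_fst[of L])
       (auto simp: bounds_nonneg var_exponent_lipschitz_s var_exponent_continuous_x)
  then show ?thesis unfolding variation_def by (intro continuous_intros)
qed

lemma continuous_on_variation_swapped:
  "s \<le> 1 \<Longrightarrow> continuous_on (UNIV \<times> {0..s}) (\<lambda>p. variation (snd p) (fst p))"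
  by (rule continuous_on_compose2[OF variation_continuous, of _ "\<lambda>p. (snd p, fst p)", simplified])
     (auto intro!: continuous_intros)

definition var_exponent_x :: "real \<Rightarrow> real \<Rightarrow> real"
  where "var_exponent_x s x = integral {0..s} (\<lambda>\<sigma>. F\<^sub>v\<^sub>v \<sigma> (y \<sigma> x) * variation \<sigma> x)"

lemma continuous_var_exponent_x_integrand:
  assumes "s \<le> 1"
  shows "continuous_on (UNIV \<times> {0..s}) (\<lambda>(x, t). F\<^sub>v\<^sub>v t (y t x) * variation t x)"
proof -
  have "continuous_on (UNIV \<times> {0..s}) (\<lambda>p. F\<^sub>v\<^sub>v (snd p) (y (snd p) (fst p)))"
    by (rule continuous_on_compose_curried[OF continuous_F\<^sub>v\<^sub>v])
       (auto intro: continuous_intros continuous_on_flow_swapped[OF assms])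
  then show ?thesis
    using continuous_on_variation_swapped[OF assms] by (auto simp: split_beta intro!: continuous_intros)
qed

lemma var_exponent_has_derivative_x:
  assumes s: "s \<in> {0..1}"
  shows "((\<lambda>x. var_exponent s x) has_real_derivative var_exponent_x s x) (at x)"
proof -
  have "((\<lambda>x. integral (cbox 0 s) (\<lambda>t. F\<^sub>v t (y t x))) has_field_derivative
          integral (cbox 0 s) (\<lambda>t. F\<^sub>v\<^sub>v t (y t x) * variation t x)) (at x within UNIV)"
  proof (rule leibniz_rule_field_derivative[where fx = "\<lambda>x t. F\<^sub>v\<^sub>v t (y t x) * variation t x"])
    fix x' t assume "t \<in> cbox 0 s"
    then have t: "t \<in> {0..1}" using s by auto
    show "((\<lambda>x. F\<^sub>v t (y t x)) has_field_derivative F\<^sub>v\<^sub>v t (y t x') * variation t x') (at x' within UNIV)"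
      by (rule DERIV_chain2[OF F\<^sub>v_has_derivative flow_has_derivative_x[OF t]])
  next
    show "(\<lambda>t. F\<^sub>v t (y t x')) integrable_on cbox 0 s" for x'
      unfolding cbox_interval using s
      by (intro integrable_continuous_interval continuous_on_subset[OF continuous_F\<^sub>v_along_flow]) auto
  qed (use continuous_var_exponent_x_integrand s in \<open>auto simp: cbox_interval\<close>)
  then show ?thesis by (simp add: var_exponent_def var_exponent_x_def cbox_interval)
qed

lemma variation_has_derivative_x:
  "s \<in> {0..1} \<Longrightarrow> ((\<lambda>x. variation s x) has_real_derivative variation s x * var_exponent_x s x) (at x)"
  unfolding variation_def by (auto intro!: derivative_eq_intros var_exponent_has_derivative_x)

lemma var_exponent_x_has_derivative_s:
  assumes "s \<in> {0..1}"
  shows "((\<lambda>s. var_exponent_x s x) has_real_derivative F\<^sub>v\<^sub>v s (y s x) * variation s x) (at s within {0..1})"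
proof -
  have "continuous_on {0..1} ((\<lambda>(x, t). F\<^sub>v\<^sub>v t (y t x) * variation t x) \<circ> (\<lambda>t. (x, t)))"
    by (intro continuous_on_compose continuous_intros continuous_on_subset[OF continuous_var_exponent_x_integrand])
       auto
  then have "continuous_on {0..1} (\<lambda>t. F\<^sub>v\<^sub>v t (y t x) * variation t x)"
    by (simp add: o_def)
  then show ?thesis
    unfolding var_exponent_x_def by (rule integral_has_real_derivative[OF _ assms])
qed

lemma var_exponent_x_lipschitz_s:
  assumes "s \<in> {0..1}" "s' \<in> {0..1}"
  shows "\<bar>var_exponent_x s' x - var_exponent_x s x\<bar> \<le> K * exp L * \<bar>s' - s\<bar>"
proof -
  have "norm (F\<^sub>v\<^sub>v t (y t x) * variation t x) \<le> K * exp L" if "t \<in> {0..1}" for t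
    using F\<^sub>v\<^sub>v_bound[OF that] variation_bound[OF that] bounds_nonneg by (simp add: abs_mult mult_mono)
  then show ?thesis
    using field_differentiable_bound[of "{0..1}" "\<lambda>s. var_exponent_x s x"
        "\<lambda>s. F\<^sub>v\<^sub>v s (y s x) * variation s x" "K * exp L" s' s]
      var_exponent_x_has_derivative_s assms
    by auto
qed

lemma var_exponent_x_continuous_x: "s \<in> {0..1} \<Longrightarrow> continuous_on UNIV (\<lambda>x. var_exponent_x s x)"
  unfolding var_exponent_x_def
  by (intro integral_continuous_on_param[of UNIV 0 s, unfolded cbox_interval]
        continuous_var_exponent_x_integrand) auto

lemma var_exponent_x_continuous: "continuous_on strip (\<lambda>p. var_exponent_x (fst p) (snd p))"
  by (rule continuous_on_strip_if_lipschitz_fst[of "K * exp L"])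
     (auto simp: bounds_nonneg var_exponent_x_lipschitz_s var_exponent_x_continuous_x)

abbreviation "Y \<equiv> \<lambda>p. y (fst p) (snd p)"
abbreviation "Y\<^sub>s \<equiv> \<lambda>p. F (fst p) (Y p)"
abbreviation "Y\<^sub>x \<equiv> \<lambda>p. variation (fst p) (snd p)"

lemma continuous_along_flow:
  "continuous_on UNIV (\<lambda>p. G (fst p) (snd p)) \<Longrightarrow> continuous_on strip (\<lambda>p. G (fst p) (Y p))"
  by (rule continuous_on_compose_curried) (auto intro: continuous_intros flow_continuous)

lemma C1_partials_on_flow: "C1_partials_on strip Y Y\<^sub>s Y\<^sub>x"
  by (rule C1_partials_on_strip)
     (auto intro: flow_has_derivative_s flow_has_derivative_x variation_continuous
        continuous_along_flow[OF continuous_F])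

lemma C1_partials_on_variation:
  "C1_partials_on strip Y\<^sub>x (\<lambda>p. F\<^sub>v (fst p) (Y p) * Y\<^sub>x p) (\<lambda>p. Y\<^sub>x p * var_exponent_x (fst p) (snd p))"
  by (rule C1_partials_on_strip)
     (use continuous_along_flow[OF continuous_F\<^sub>v] variation_continuous var_exponent_x_continuous in
      \<open>auto intro!: continuous_intros variation_has_derivative_s variation_has_derivative_x\<close>)

lemma C1_partials_on_flow_velocity:
  "C1_partials_on strip Y\<^sub>s (\<lambda>p. F\<^sub>s (fst p) (Y p) + F\<^sub>v (fst p) (Y p) * Y\<^sub>s p) (\<lambda>p. F\<^sub>v (fst p) (Y p) * Y\<^sub>x p)"
proof -
  have "(Y\<^sub>s has_derivative (\<lambda>h. (F\<^sub>s (fst p) (Y p) + F\<^sub>v (fst p) (Y p) * Y\<^sub>s p) * fst h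
                          + (F\<^sub>v (fst p) (Y p) * Y\<^sub>x p) * snd h)) (at p within strip)"
    if "p \<in> strip" for p
    using has_derivative_compose[OF has_derivative_Pair[OF has_derivative_fst[OF has_derivative_ident]
          C1_partials_onD[OF C1_partials_on_flow that]] F_has_derivative[of "fst p" "Y p"]]
    by (simp add: algebra_simps)
  then show ?thesis
    unfolding C1_partials_on_def
    using continuous_along_flow[OF continuous_F\<^sub>s] continuous_along_flow[OF continuous_F\<^sub>v]
      continuous_along_flow[OF continuous_F] variation_continuous
    by (auto intro!: continuous_intros)
qed

lemma C2_on_flow: "C2_on Y strip"
  by (rule C2_on_if_C1_partials_on[OF C1_partials_on_flow C1_partials_on_flow_velocity C1_partials_on_variation])

end

section \<open>The bump perturbation and its vector field\<close>

lemma has_real_derivative_poly_on_Icc: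
  fixes P :: "real poly"
  assumes "a < b" and "poly P a = 0" "poly P b = 0" "poly (pderiv P) a = 0" "poly (pderiv P) b = 0"
  shows "((\<lambda>t. if t \<in> {a..b} then poly P t else 0) has_real_derivative
           (if y \<in> {a..b} then poly (pderiv P) y else 0)) (at y)"
proof -
  have ends: "y = a \<or> y = b" if "y \<in> closure {a..b}" "y \<in> closure (- {a..b})"
    using that by (auto simp: closure_complement)
  have "(poly P has_derivative (*) (poly (pderiv P) y)) (at y within S)" for S
    using poly_DERIV[of P y] by (simp add: has_field_derivative_def has_derivative_at_withinI)
  then have "((\<lambda>t. if t \<in> {a..b} then poly P t else 0) has_derivative
      (if y \<in> {a..b} then (*) (poly (pderiv P) y) else (*) 0)) (at y within ({a..b} \<union> - {a..b}))"
    by (intro has_derivative_If_within_closures) (use assms ends in \<open>auto simp: fun_eq_iff\<close>)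
  then show ?thesis
    by (simp add: has_field_derivative_def if_distrib[of "(*)"] cong: if_cong)
qed

lemma continuous_on_poly_on_Icc:
  fixes P :: "real poly"
  assumes "a < b" and "poly P a = 0" "poly P b = 0"
  shows "continuous_on UNIV (\<lambda>t. if t \<in> {a..b} then poly P t else 0)"
proof -
  have clamp: "(\<lambda>t. if t \<in> {a..b} then poly P t else 0) = (\<lambda>t. poly P (max a (min b t)))"
    using assms by (auto simp: max_def min_def fun_eq_iff)
  show ?thesis unfolding clamp by (intro continuous_intros)
qed

lemma bounded_on_strip_if_support_in:
  fixes G :: "real \<Rightarrow> real \<Rightarrow> real"
  assumes "continuous_on UNIV (\<lambda>p. G (fst p) (snd p))" and "\<And>s v. v \<notin> {a..b} \<Longrightarrow> G s v = 0"
  obtains B where "\<And>s v. s \<in> {0..1} \<Longrightarrow> \<bar>G s v\<bar> \<le> B"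
proof -
  obtain B where "B \<ge> 0" and B: "\<And>p. p \<in> {0..1} \<times> {a..b} \<Longrightarrow> norm (G (fst p) (snd p)) \<le> B"
    using continuous_on_compact_bound[OF compact_Times[OF compact_Icc compact_Icc]
        continuous_on_subset[OF assms(1)]] by blast
  have "\<bar>G s v\<bar> \<le> B" if "s \<in> {0..1}" for s v
    using B[of "(s, v)"] assms(2)[of v s] \<open>B \<ge> 0\<close> that by (cases "v \<in> {a..b}") auto
  then show ?thesis using that by blast
qed

definition psi :: "real \<Rightarrow> real" where "psi A = A / (1 + A\<^sup>2)"
definition psi' :: "real \<Rightarrow> real" where "psi' A = (1 - A\<^sup>2) / (1 + A\<^sup>2)\<^sup>2"
definition psi'' :: "real \<Rightarrow> real" where "psi'' A = (2 * A ^ 3 - 6 * A) / (1 + A\<^sup>2) ^ 3"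

lemma one_plus_square_pos: "0 < 1 + (A::real)\<^sup>2"
  by (simp add: add_pos_nonneg)

lemma one_plus_square_neq_0: "1 + A\<^sup>2 \<noteq> (0::real)"
  using one_plus_square_pos[of A] by simp

lemma psi_has_derivative: "(psi has_real_derivative psi' A) (at A)"
  unfolding psi_def[abs_def] psi'_def
  by (rule derivative_eq_intros refl | simp add: one_plus_square_neq_0)+
     (simp add: field_simps one_plus_square_neq_0 power2_eq_square)

lemma psi'_has_derivative: "(psi' has_real_derivative psi'' A) (at A)"
  unfolding psi'_def[abs_def] psi''_def
  by (rule derivative_eq_intros refl | simp add: one_plus_square_neq_0)+
     (simp add: divide_simps one_plus_square_neq_0 power2_eq_square, algebra)

lemma continuous_on_psi [continuous_intros]: "continuous_on S g \<Longrightarrow> continuous_on S (\<lambda>x. psi (g x))"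
  and continuous_on_psi' [continuous_intros]: "continuous_on S g \<Longrightarrow> continuous_on S (\<lambda>x. psi' (g x))"
  and continuous_on_psi'' [continuous_intros]: "continuous_on S g \<Longrightarrow> continuous_on S (\<lambda>x. psi'' (g x))"
  unfolding psi_def psi'_def psi''_def by (intro continuous_intros; simp add: one_plus_square_neq_0)+

locale bump_perturbation =
  fixes w :: "real \<Rightarrow> real" and a b :: real and p :: "real poly" and \<phi> :: "real \<Rightarrow> real"
  assumes w_C3: "Ck_real 3 w" and a_less_b: "a < b"
    and phi_def: "\<forall>x. \<phi> x = (if x \<in> {a..b} then poly p x else 0)"
    and phi_boundary: "\<forall>k\<le>3. poly ((pderiv ^^ k) p) a = 0 \<and> poly ((pderiv ^^ k) p) b = 0"
begin

definition phi_deriv :: "nat \<Rightarrow> real \<Rightarrow> real"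
  where "phi_deriv k t = (if t \<in> {a..b} then poly ((pderiv ^^ k) p) t else 0)"

definition "w' = deriv w"
definition "w'' = deriv w'"
definition "w''' = deriv w''"

lemma phi_deriv_eq_0: "t \<notin> {a..b} \<Longrightarrow> phi_deriv k t = 0"
  unfolding phi_deriv_def by (simp only: if_False)

lemma phi_deriv_has_derivative:
  "(phi_deriv 0 has_real_derivative phi_deriv 1 t) (at t)"
  "(phi_deriv 1 has_real_derivative phi_deriv 2 t) (at t)"
  "(phi_deriv 2 has_real_derivative phi_deriv 3 t) (at t)"
proof -
  have *: "k \<le> 2 \<Longrightarrow> (phi_deriv k has_real_derivative phi_deriv (Suc k) t) (at t)" for k
    using has_real_derivative_poly_on_Icc[OF a_less_b, of "(pderiv ^^ k) p" t] phi_boundary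
      spec[OF phi_boundary, of "Suc k"]
    by (auto simp: phi_deriv_def[abs_def])
  show "(phi_deriv 0 has_real_derivative phi_deriv 1 t) (at t)"
    "(phi_deriv 1 has_real_derivative phi_deriv 2 t) (at t)"
    "(phi_deriv 2 has_real_derivative phi_deriv 3 t) (at t)"
    using *[of 0] *[of 1] *[of 2] by (simp_all add: numeral_2_eq_2 numeral_3_eq_3)
qed

lemma phi_deriv_continuous: "k \<le> 3 \<Longrightarrow> continuous_on UNIV (phi_deriv k)"
  using continuous_on_poly_on_Icc[OF a_less_b, of "(pderiv ^^ k) p"] phi_boundary
  by (simp add: phi_deriv_def[abs_def])

lemma phi_eq_phi_deriv_0: "\<phi> = phi_deriv 0"
  using phi_def by (auto simp: phi_deriv_def fun_eq_iff)

lemma deriv_phi: "deriv \<phi> t = phi_deriv 1 t"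
  using phi_deriv_has_derivative(1)[of t] by (simp add: phi_eq_phi_deriv_0 DERIV_imp_deriv)

lemma w_has_derivative: "(w has_real_derivative w' t) (at t)"
  and w'_has_derivative: "(w' has_real_derivative w'' t) (at t)"
  and w''_has_derivative: "(w'' has_real_derivative w''' t) (at t)"
  using w_C3 unfolding Ck_real_def w'_def w''_def w'''_def
  by (auto simp: DERIV_deriv_iff_real_differentiable numeral_2_eq_2 dest: spec[of _ 0] spec[of _ 1] spec[of _ 2])

lemma w'''_continuous: "continuous_on UNIV w'''"
  using w_C3 by (simp add: Ck_real_def w'_def w''_def w'''_def numeral_3_eq_3)

lemma continuous_on_phi_deriv [continuous_intros]:
  "k \<le> 3 \<Longrightarrow> continuous_on S g \<Longrightarrow> continuous_on S (\<lambda>x. phi_deriv k (g x))"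
  using continuous_on_compose2[OF phi_deriv_continuous, of k S g] by simp

lemma w'_continuous: "continuous_on UNIV w'"
  by (rule DERIV_continuous_on[OF has_field_derivative_at_within[OF w'_has_derivative]])

lemma w''_continuous: "continuous_on UNIV w''"
  by (rule DERIV_continuous_on[OF has_field_derivative_at_within[OF w''_has_derivative]])

lemma continuous_on_w' [continuous_intros]: "continuous_on S g \<Longrightarrow> continuous_on S (\<lambda>x. w' (g x))"
  using continuous_on_compose2[OF w'_continuous, of S g] by simp

lemma continuous_on_w'' [continuous_intros]: "continuous_on S g \<Longrightarrow> continuous_on S (\<lambda>x. w'' (g x))"
  using continuous_on_compose2[OF w''_continuous, of S g] by simp

lemma continuous_on_w''' [continuous_intros]: "continuous_on S g \<Longrightarrow> continuous_on S (\<lambda>x. w''' (g x))"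
  using continuous_on_compose2[OF w'''_continuous, of S g] by simp

text \<open>The level \<open>(\<eta> - w \<circ> \<xi>) / (\<phi> \<circ> \<xi>)\<close> increases with speed \<open>1 + slope\<^sup>2\<close> and \<open>\<xi>\<close> with speed
  \<open>-\<phi>(\<xi>) slope\<close>, so \<open>g(s,x) = \<xi>(t\<^sub>0(s,x),x)\<close> solves \<open>\<partial>\<^sub>s g = field s g\<close>.\<close>
definition "slope s v = w' v + s * phi_deriv 1 v"
definition "slope_v s v = w'' v + s * phi_deriv 2 v"
definition "slope_vv s v = w''' v + s * phi_deriv 3 v"
definition "field s v = - (phi_deriv 0 v * psi (slope s v))"
definition "field_s s v = - (phi_deriv 0 v * (psi' (slope s v) * phi_deriv 1 v))"
definition "field_v s v = - (phi_deriv 1 v * psi (slope s v) + phi_deriv 0 v * (psi' (slope s v) * slope_v s v))"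
definition "field_vv s v = - (phi_deriv 2 v * psi (slope s v) + 2 * (phi_deriv 1 v * (psi' (slope s v) * slope_v s v))
   + phi_deriv 0 v * (psi'' (slope s v) * slope_v s v * slope_v s v + psi' (slope s v) * slope_vv s v))"

lemma field_has_derivative:
  "((\<lambda>p. field (fst p) (snd p)) has_derivative (\<lambda>h. field_s s v * fst h + field_v s v * snd h)) (at (s, v))"
  unfolding field_def[abs_def] slope_def field_s_def field_v_def slope_v_def
  by (rule has_derivative_eq_rhs,
      (rule derivative_eq_intros DERIV_compose_FDERIV[OF phi_deriv_has_derivative(1)] DERIV_compose_FDERIV[OF phi_deriv_has_derivative(2)]
        DERIV_compose_FDERIV[OF w'_has_derivative] DERIV_compose_FDERIV[OF psi_has_derivative] refl | simp)+)
     (simp add: fun_eq_iff algebra_simps)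

lemma field_v_has_derivative: "((\<lambda>v. field_v s v) has_real_derivative field_vv s v) (at v)"
  unfolding field_v_def[abs_def] field_vv_def slope_def slope_v_def slope_vv_def
  by (rule DERIV_cong,
      (rule derivative_eq_intros DERIV_chain2[OF phi_deriv_has_derivative(1)] DERIV_chain2[OF phi_deriv_has_derivative(2)]
        DERIV_chain2[OF phi_deriv_has_derivative(3)]
        DERIV_chain2[OF w'_has_derivative] DERIV_chain2[OF w''_has_derivative]
        DERIV_chain2[OF psi_has_derivative] DERIV_chain2[OF psi'_has_derivative] refl | simp)+)
     (simp add: algebra_simps)

lemma continuous_field: "continuous_on UNIV (\<lambda>p. field (fst p) (snd p))"
  and continuous_field_s: "continuous_on UNIV (\<lambda>p. field_s (fst p) (snd p))"
  and continuous_field_v: "continuous_on UNIV (\<lambda>p. field_v (fst p) (snd p))"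
  and continuous_field_vv: "continuous_on UNIV (\<lambda>p. field_vv (fst p) (snd p))"
  unfolding field_def field_s_def field_v_def field_vv_def slope_def slope_v_def slope_vv_def
  by (intro continuous_intros; simp)+

lemma field_eq_0: "v \<notin> {a..b} \<Longrightarrow> field s v = 0"
  and field_v_eq_0: "v \<notin> {a..b} \<Longrightarrow> field_v s v = 0"
  and field_vv_eq_0: "v \<notin> {a..b} \<Longrightarrow> field_vv s v = 0"
  by (simp_all add: field_def field_v_def field_vv_def phi_deriv_eq_0)

lemma scalar_flow_of_field:
  assumes "\<And>s x. s \<in> {0..1} \<Longrightarrow> ((\<lambda>s. y s x) has_real_derivative field s (y s x)) (at s within {0..1})"
    and "\<And>x. y 0 x = x"
  obtains M L K where "scalar_flow field field_s field_v field_vv y M L K"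
proof -
  obtain M where M: "\<And>s v. s \<in> {0..1} \<Longrightarrow> \<bar>field s v\<bar> \<le> M"
    using bounded_on_strip_if_support_in[OF continuous_field field_eq_0] by blast
  obtain L where L: "\<And>s v. s \<in> {0..1} \<Longrightarrow> \<bar>field_v s v\<bar> \<le> L"
    using bounded_on_strip_if_support_in[OF continuous_field_v field_v_eq_0] by blast
  obtain K where K: "\<And>s v. s \<in> {0..1} \<Longrightarrow> \<bar>field_vv s v\<bar> \<le> K"
    using bounded_on_strip_if_support_in[OF continuous_field_vv field_vv_eq_0] by blast
  have "scalar_flow field field_s field_v field_vv y M L K"
    by unfold_locales
       (use M L K assms field_has_derivative field_v_has_derivative continuous_field_s
          continuous_field_v continuous_field_vv in auto)
  then show ?thesis by (rule that)
qed

end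

section \<open>The first time along a characteristic\<close>

lemma strict_mono_on_Icc_if_pos_derivative:
  fixes f :: "real \<Rightarrow> real"
  assumes "\<And>t. t \<in> {c..d} \<Longrightarrow> (f has_real_derivative f' t) (at t)" and "\<And>t. t \<in> {c..d} \<Longrightarrow> f' t > 0"
  shows "strict_mono_on {c..d} f"
proof (rule strict_mono_onI)
  fix t\<^sub>1 t\<^sub>2 assume t: "t\<^sub>1 \<in> {c..d}" "t\<^sub>2 \<in> {c..d}" "t\<^sub>1 < t\<^sub>2"
  show "f t\<^sub>1 < f t\<^sub>2"
  proof (rule DERIV_pos_imp_increasing[OF \<open>t\<^sub>1 < t\<^sub>2\<close>])
    fix t assume "t\<^sub>1 \<le> t" "t \<le> t\<^sub>2"
    then have "t \<in> {c..d}" using t by auto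
    then show "\<exists>y. (f has_real_derivative y) (at t) \<and> y > 0" using assms by blast
  qed
qed

lemma inv_into_Icc_has_real_derivative:
  fixes f :: "real \<Rightarrow> real"
  assumes der: "\<And>t. t \<in> {c..d} \<Longrightarrow> (f has_real_derivative f' t) (at t)"
    and pos: "\<And>t. t \<in> {c..d} \<Longrightarrow> f' t > 0" and "c \<le> d" and z: "f c < z" "z < f d"
  shows "inv_into {c..d} f z \<in> {c..d}" and "f (inv_into {c..d} f z) = z"
    and "(inv_into {c..d} f has_real_derivative inverse (f' (inv_into {c..d} f z))) (at z)"
proof -
  let ?g = "inv_into {c..d} f"
  have mono: "strict_mono_on {c..d} f" by (rule strict_mono_on_Icc_if_pos_derivative[OF der pos])
  then have inj: "inj_on f {c..d}" by (rule strict_mono_on_imp_inj_on)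
  have "c < d" using z \<open>c \<le> d\<close> by (cases "c = d") auto
  have cont: "continuous_on {c..d} f"
    by (rule DERIV_continuous_on[OF has_field_derivative_at_within[OF der]])
  have range: "?g y \<in> {c..d} \<and> f (?g y) = y" if "f c < y" "y < f d" for y
  proof -
    have "y \<in> f ` {c..d}" using IVT'[of f c y d] that \<open>c < d\<close> cont by force
    then show ?thesis using inv_into_into[of y f "{c..d}"] f_inv_into_f[of y f "{c..d}"] by blast
  qed
  then show "?g z \<in> {c..d}" and fg: "f (?g z) = z" using z by auto
  have "?g z \<noteq> c" "?g z \<noteq> d" using fg z by auto
  with \<open>?g z \<in> {c..d}\<close> have "0 < min (?g z - c) (d - ?g z)" by auto
  then have "isCont ?g (f (?g z))"
  proof (rule isCont_inverse_function[where f = f and x = "inv_into {c..d} f z"])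
    fix t assume "\<bar>t - ?g z\<bar> \<le> min (?g z - c) (d - ?g z)"
    then have t: "t \<in> {c..d}" by (auto simp: abs_le_iff)
    show "?g (f t) = t" by (rule inv_into_f_f[OF inj t])
    show "isCont f t" by (rule DERIV_isCont[OF der[OF t]])
  qed
  then have "isCont ?g z" by (simp add: fg)
  have "(f has_real_derivative f' (?g z)) (at (?g z))" by (rule der) fact
  then show "(?g has_real_derivative inverse (f' (?g z))) (at z)"
  proof (rule DERIV_inverse_function[where a = "f c" and b = "f d"])
    show "f' (?g z) \<noteq> 0" using pos[OF \<open>?g z \<in> {c..d}\<close>] by simp
  qed (use range z \<open>isCont ?g z\<close> in auto)
qed

lemma open_contains_larger_Icc:
  fixes T :: real
  assumes "open U" "{0..T} \<subseteq> U" "0 \<le> T"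
  obtains c d where "c < 0" "T < d" "{c..d} \<subseteq> U"
proof -
  obtain e\<^sub>0 e\<^sub>T where "e\<^sub>0 > 0" "ball 0 e\<^sub>0 \<subseteq> U" "e\<^sub>T > 0" "ball T e\<^sub>T \<subseteq> U"
    using assms open_contains_ball by (metis atLeastAtMost_iff order_refl subset_iff)
  define e where "e = min e\<^sub>0 e\<^sub>T / 2"
  have "t \<in> U" if "t \<in> {-e..T + e}" for t
  proof (cases "t < 0 \<or> t > T")
    case True
    then have "t \<in> ball 0 e\<^sub>0 \<or> t \<in> ball T e\<^sub>T"
      using that \<open>e\<^sub>0 > 0\<close> \<open>e\<^sub>T > 0\<close> by (auto simp: e_def dist_real_def)
    then show ?thesis using \<open>ball 0 e\<^sub>0 \<subseteq> U\<close> \<open>ball T e\<^sub>T \<subseteq> U\<close> by auto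
  qed (use assms in auto)
  moreover have "-e < 0" "T < T + e" using \<open>e\<^sub>0 > 0\<close> \<open>e\<^sub>T > 0\<close> by (auto simp: e_def)
  ultimately show ?thesis using that by blast
qed

lemma first_time_eqI:
  assumes "t \<ge> 0" "\<eta> t x = w (\<xi> t x) + s * \<phi> (\<xi> t x)"
    and "\<And>\<tau>. 0 \<le> \<tau> \<Longrightarrow> \<tau> < t \<Longrightarrow> \<eta> \<tau> x \<noteq> w (\<xi> \<tau> x) + s * \<phi> (\<xi> \<tau> x)"
  shows "first_time \<xi> \<eta> w \<phi> s x = t"
  unfolding first_time_def
  by (rule cInf_eq_minimum) (use assms in \<open>auto simp: not_less[symmetric]\<close>)

locale bump_characteristics = bump_perturbation w a b p \<phi> for w a b p \<phi> +
  fixes \<xi> \<eta> :: "real \<Rightarrow> real \<Rightarrow> real"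
  assumes xi_has_derivative: "\<forall>x t. ((\<lambda>\<tau>. \<xi> \<tau> x) has_real_derivative
                 (- deriv w (\<xi> t x) * \<phi> (\<xi> t x) - (\<eta> t x - w (\<xi> t x)) * deriv \<phi> (\<xi> t x))) (at t)"
    and eta_has_derivative: "\<forall>x t. ((\<lambda>\<tau>. \<eta> \<tau> x) has_real_derivative \<phi> (\<xi> t x)) (at t)"
    and initial_values: "\<forall>x. \<xi> 0 x = x \<and> \<eta> 0 x = w x"
begin

abbreviation "t\<^sub>0 \<equiv> first_time \<xi> \<eta> w \<phi>"

definition "phi_along x t = phi_deriv 0 (\<xi> t x)"
definition "excess x t = \<eta> t x - w (\<xi> t x)"
definition "level x t = excess x t / phi_along x t"
definition "xi_speed x t = - (w' (\<xi> t x) * phi_along x t) - excess x t * phi_deriv 1 (\<xi> t x)"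

lemma reaches_level_iff: "phi_along x t \<noteq> 0 \<Longrightarrow>
    \<eta> t x = w (\<xi> t x) + s * \<phi> (\<xi> t x) \<longleftrightarrow> level x t = s"
  by (auto simp: level_def excess_def phi_along_def phi_eq_phi_deriv_0 field_simps)

lemma has_derivative_xi_speed: "((\<lambda>t. \<xi> t x) has_real_derivative xi_speed x t) (at t)"
  using xi_has_derivative unfolding xi_speed_def phi_along_def excess_def deriv_phi w'_def
  by (simp add: phi_eq_phi_deriv_0)

lemma xi_speed_eq: "phi_along x t \<noteq> 0 \<Longrightarrow> xi_speed x t = - phi_along x t * slope (level x t) (\<xi> t x)"
  by (simp add: xi_speed_def level_def slope_def field_simps)

lemma phi_along_has_derivative:
  "(phi_along x has_real_derivative phi_deriv 1 (\<xi> t x) * xi_speed x t) (at t)"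
  unfolding phi_along_def[abs_def] by (rule DERIV_chain2[OF phi_deriv_has_derivative(1) has_derivative_xi_speed])

lemma excess_has_derivative: "(excess x has_real_derivative phi_along x t - w' (\<xi> t x) * xi_speed x t) (at t)"
  unfolding excess_def[abs_def]
  using eta_has_derivative DERIV_chain2[OF w_has_derivative has_derivative_xi_speed]
  by (auto intro!: derivative_eq_intros simp: phi_along_def phi_eq_phi_deriv_0)

lemma level_has_derivative:
  assumes "phi_along x t \<noteq> 0"
  shows "(level x has_real_derivative 1 + (slope (level x t) (\<xi> t x))\<^sup>2) (at t)"
proof -
  have "(level x has_real_derivative ((phi_along x t - w' (\<xi> t x) * xi_speed x t) * phi_along x t
      - excess x t * (phi_deriv 1 (\<xi> t x) * xi_speed x t)) / (phi_along x t * phi_along x t)) (at t)"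
    unfolding level_def[abs_def]
    using DERIV_divide[OF excess_has_derivative phi_along_has_derivative assms] by simp
  moreover have "((phi_along x t - w' (\<xi> t x) * xi_speed x t) * phi_along x t
      - excess x t * (phi_deriv 1 (\<xi> t x) * xi_speed x t)) / (phi_along x t * phi_along x t)
      = 1 + (slope (level x t) (\<xi> t x))\<^sup>2"
    using assms unfolding level_def xi_speed_def slope_def by (simp add: field_simps power2_eq_square)
  ultimately show ?thesis by simp
qed

lemma continuous_on_phi_along: "continuous_on S (phi_along x)"
  by (rule DERIV_continuous_on[OF has_field_derivative_at_within[OF phi_along_has_derivative]])

lemma continuous_on_excess: "continuous_on S (excess x)"
  by (rule DERIV_continuous_on[OF has_field_derivative_at_within[OF excess_has_derivative]])

lemma continuous_on_level: "(\<And>t. t \<in> S \<Longrightarrow> phi_along x t \<noteq> 0) \<Longrightarrow> continuous_on S (level x)"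
  unfolding level_def[abs_def] by (intro continuous_intros continuous_on_phi_along continuous_on_excess) auto

lemma phi_along_0: "phi_along x 0 = \<phi> x"
  using initial_values by (simp add: phi_along_def phi_eq_phi_deriv_0)

lemma excess_0: "excess x 0 = 0"
  using initial_values by (simp add: excess_def)

lemma level_0: "level x 0 = 0"
  by (simp add: level_def excess_0)

lemma level_ge_time:
  assumes "0 \<le> t" and nonzero: "\<And>\<tau>. \<tau> \<in> {0..t} \<Longrightarrow> phi_along x \<tau> \<noteq> 0"
  shows "level x t \<ge> t"
proof -
  have "level x 0 - 0 \<le> level x t - t"
  proof (rule DERIV_nonneg_imp_nondecreasing[OF assms(1)])
    fix \<tau> assume "0 \<le> \<tau>" "\<tau> \<le> t"
    then have "((\<lambda>\<tau>. level x \<tau> - \<tau>) has_real_derivative (1 + (slope (level x \<tau>) (\<xi> \<tau> x))\<^sup>2) - 1) (at \<tau>)"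
      using nonzero by (intro derivative_intros level_has_derivative) auto
    then show "\<exists>y. ((\<lambda>\<tau>. level x \<tau> - \<tau>) has_real_derivative y) (at \<tau>) \<and> 0 \<le> y" by auto
  qed
  then show ?thesis by (simp add: level_0)
qed

text \<open>Gronwall: \<open>(\<phi> \<circ> \<xi>)\<^sup>2 e\<^sup>2\<^sup>B\<^sup>t\<close> is nondecreasing as long as the level stays below one.\<close>
lemma phi_along_square_lower_bound:
  obtains B where "\<And>t. t \<in> {0..1} \<Longrightarrow> (\<And>\<tau>. \<tau> \<in> {0..t} \<Longrightarrow> phi_along x \<tau> \<noteq> 0 \<and> level x \<tau> \<le> 1) \<Longrightarrow>
    (\<phi> x)\<^sup>2 * exp (- 2 * B) \<le> (phi_along x t)\<^sup>2"
proof -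
  have cont_xi: "continuous_on {0..1} (\<lambda>t. \<xi> t x)"
    by (rule DERIV_continuous_on[OF has_field_derivative_at_within[OF has_derivative_xi_speed]])
  obtain B\<^sub>1 where B\<^sub>1: "B\<^sub>1 \<ge> 0" "\<And>t. t \<in> {0..1} \<Longrightarrow> \<bar>phi_deriv 1 (\<xi> t x)\<bar> \<le> B\<^sub>1"
    using continuous_on_compact_bound[OF compact_Icc continuous_on_phi_deriv[OF _ cont_xi, of 1]] by auto
  obtain B\<^sub>2 where B\<^sub>2: "B\<^sub>2 \<ge> 0" "\<And>t. t \<in> {0..1} \<Longrightarrow> \<bar>w' (\<xi> t x)\<bar> \<le> B\<^sub>2"
    using continuous_on_compact_bound[OF compact_Icc continuous_on_w'[OF cont_xi]] by auto
  define B where "B = B\<^sub>1 * (B\<^sub>2 + B\<^sub>1)"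
  have "(\<phi> x)\<^sup>2 * exp (- 2 * B) \<le> (phi_along x t)\<^sup>2"
    if t: "t \<in> {0..1}" and below: "\<And>\<tau>. \<tau> \<in> {0..t} \<Longrightarrow> phi_along x \<tau> \<noteq> 0 \<and> level x \<tau> \<le> 1" for t
  proof -
    define W where "W \<tau> = (phi_along x \<tau>)\<^sup>2 * exp (2 * B * \<tau>)" for \<tau>
    have "W 0 \<le> W t"
    proof (rule DERIV_nonneg_imp_nondecreasing[of 0 t W])
      fix \<tau> assume "0 \<le> \<tau>" "\<tau> \<le> t"
      then have \<tau>: "\<tau> \<in> {0..1}" "phi_along x \<tau> \<noteq> 0" "level x \<tau> \<le> 1" using t below[of \<tau>] by auto
      let ?c = "phi_deriv 1 (\<xi> \<tau> x)" and ?v = "w' (\<xi> \<tau> x)"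
      have "?c * ?v \<le> B\<^sub>1 * B\<^sub>2"
        using B\<^sub>1 B\<^sub>2 \<tau>(1) abs_ge_self[of "?c * ?v"] mult_mono[of "\<bar>?c\<bar>" B\<^sub>1 "\<bar>?v\<bar>" B\<^sub>2]
        by (simp add: abs_mult)
      moreover have "level x \<tau> * ?c\<^sup>2 \<le> B\<^sub>1 * B\<^sub>1"
        using mult_right_mono[OF \<tau>(3), of "?c\<^sup>2"] B\<^sub>1 \<tau>(1) mult_mono[of "\<bar>?c\<bar>" B\<^sub>1 "\<bar>?c\<bar>" B\<^sub>1]
        by (simp add: power2_eq_square abs_mult_self_eq)
      ultimately have "B - (?c * ?v + level x \<tau> * ?c\<^sup>2) \<ge> 0"
        unfolding B_def by (simp add: distrib_left)
      moreover have "(W has_real_derivative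
          2 * exp (2 * B * \<tau>) * (phi_along x \<tau>)\<^sup>2 * (B - (?c * ?v + level x \<tau> * ?c\<^sup>2))) (at \<tau>)"
        unfolding W_def[abs_def]
        by (rule derivative_eq_intros phi_along_has_derivative refl | simp)+
           (simp add: xi_speed_eq[OF \<tau>(2)] slope_def algebra_simps power2_eq_square)
      ultimately show "\<exists>y. (W has_real_derivative y) (at \<tau>) \<and> 0 \<le> y"
        by (intro exI conjI) auto
    qed (use t in auto)
    then have "(\<phi> x)\<^sup>2 \<le> (phi_along x t)\<^sup>2 * exp (2 * B * t)" by (simp add: W_def phi_along_0)
    also have "\<dots> \<le> (phi_along x t)\<^sup>2 * exp (2 * B)"
      using t B\<^sub>1 B\<^sub>2 by (intro mult_left_mono) (auto simp: B_def mult_left_le)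
    finally show ?thesis by (simp add: exp_minus field_simps)
  qed
  then show ?thesis by (rule that)
qed


lemma level_one_or_phi_along_zero: "\<exists>t\<in>{0..1}. phi_along x t * (excess x t - phi_along x t) = 0"
proof (rule ccontr)
  assume "\<not> ?thesis"
  then have nonzero: "phi_along x t \<noteq> 0" "excess x t \<noteq> phi_along x t" if "t \<in> {0..1}" for t
    using that by auto
  have "level x 0 \<le> 1" "1 \<le> level x 1" using level_0 level_ge_time[of 1 x] nonzero by auto
  then obtain t where "t \<in> {0..1}" "level x t = 1"
    using IVT'[of "level x" 0 1 1] continuous_on_level[of "{0..1}" x] nonzero by auto
  then show False using nonzero[of t] by (auto simp: level_def field_simps)
qed

lemma exists_level_one:
  assumes "\<phi> x \<noteq> 0"
  obtains T where "0 < T" "T \<le> 1" "\<And>t. t \<in> {0..T} \<Longrightarrow> phi_along x t \<noteq> 0" "level x T = 1"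
proof -
  have level_one: "excess x t = phi_along x t" if "level x t = 1" "phi_along x t \<noteq> 0" for t
    using that by (simp add: level_def field_simps)
  define C where "C = {0..1} \<inter> {t. phi_along x t * (excess x t - phi_along x t) = 0}"
  have "closed C" unfolding C_def
    by (intro closed_Int closed_atLeastAtMost closed_Collect_eq continuous_intros continuous_on_phi_along
        continuous_on_excess)
  have "0 \<notin> C" using assms by (simp add: C_def phi_along_0 excess_0)
  have "C \<noteq> {}" using level_one_or_phi_along_zero[of x] by (auto simp: C_def)
  define T where "T = Inf C"
  have "T \<in> C" unfolding T_def
    by (rule closed_contains_Inf[OF \<open>C \<noteq> {}\<close> _ \<open>closed C\<close>]) (auto simp: C_def bdd_below_def)
  then have T: "0 < T" "T \<le> 1" using \<open>0 \<notin> C\<close> by (auto simp: C_def less_le)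
  have before_T: "phi_along x t \<noteq> 0 \<and> excess x t \<noteq> phi_along x t" if "0 \<le> t" "t < T" for t
  proof -
    have "bdd_below C" by (auto simp: C_def bdd_below_def)
    then have "t \<notin> C" using cInf_lower[of t C] that unfolding T_def by auto
    then show ?thesis using that T by (auto simp: C_def)
  qed
  have level_below_1: "level x t \<le> 1" if t: "0 \<le> t" "t < T" for t
  proof (rule ccontr)
    assume "\<not> level x t \<le> 1"
    moreover have "continuous_on {0..t} (level x)"
      using before_T t by (intro continuous_on_level) auto
    ultimately obtain t' where "0 \<le> t'" "t' \<le> t" "level x t' = 1"
      using IVT'[of "level x" 0 1 t] level_0 t by auto
    then show False using before_T[of t'] level_one[of t'] t by auto
  qed
  obtain B where B: "\<And>t. t \<in> {0..1} \<Longrightarrow> (\<And>\<tau>. \<tau> \<in> {0..t} \<Longrightarrow> phi_along x \<tau> \<noteq> 0 \<and> level x \<tau> \<le> 1) \<Longrightarrow>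
      (\<phi> x)\<^sup>2 * exp (- 2 * B) \<le> (phi_along x t)\<^sup>2"
    by (rule phi_along_square_lower_bound[of x]) blast
  let ?m = "(\<phi> x)\<^sup>2 * exp (- 2 * B)"
  have "?m \<le> (phi_along x t)\<^sup>2" if "t \<in> {0..<T}" for t
  proof (rule B)
    show "t \<in> {0..1}" using that T by auto
    show "phi_along x \<tau> \<noteq> 0 \<and> level x \<tau> \<le> 1" if "\<tau> \<in> {0..t}" for \<tau>
      using that \<open>t \<in> {0..<T}\<close> before_T[of \<tau>] level_below_1[of \<tau>] by auto
  qed
  then have "closure {0..<T} \<subseteq> {t. ?m \<le> (phi_along x t)\<^sup>2}"
    by (intro closure_minimal closed_Collect_le continuous_intros continuous_on_phi_along) auto
  then have "?m \<le> (phi_along x t)\<^sup>2" if "t \<in> {0..T}" for t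
    using that T by auto
  moreover have "0 < ?m" using assms by simp
  ultimately have nonzero: "phi_along x t \<noteq> 0" if "t \<in> {0..T}" for t
    using that by (metis less_le_trans power_zero_numeral zero_less_power2)
  have "level x T = 1"
    using \<open>T \<in> C\<close> nonzero[of T] T by (auto simp: C_def level_def)
  with T nonzero show ?thesis by (rule that)
qed

context
  fixes x T c d :: real
  assumes T: "0 < T" "level x T = 1"
    and cd: "c < 0" "T < d" "\<And>t. t \<in> {c..d} \<Longrightarrow> phi_along x t \<noteq> 0"
begin

lemma level_strict_mono_on: "strict_mono_on {c..d} (level x)"
  by (rule strict_mono_on_Icc_if_pos_derivative[OF level_has_derivative[OF cd(3)] one_plus_square_pos])

lemma level_inverse:
  assumes "s \<in> {0..1}"
  shows "inv_into {c..d} (level x) s \<in> {0..T}" and "level x (inv_into {c..d} (level x) s) = s"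
    and "(inv_into {c..d} (level x) has_real_derivative
           inverse (1 + (slope s (\<xi> (inv_into {c..d} (level x) s) x))\<^sup>2)) (at s)"
proof -
  let ?\<tau> = "inv_into {c..d} (level x) s"
  have mono: "level x t\<^sub>1 < level x t\<^sub>2" if "t\<^sub>1 \<in> {c..d}" "t\<^sub>2 \<in> {c..d}" "t\<^sub>1 < t\<^sub>2" for t\<^sub>1 t\<^sub>2
    by (rule strict_mono_onD[OF level_strict_mono_on that])
  have range: "level x c < s" "s < level x d"
    using mono[of c 0] mono[of T d] T cd assms level_0 by auto
  note inv = inv_into_Icc_has_real_derivative[OF level_has_derivative[OF cd(3)] one_plus_square_pos _ range]
  show \<tau>: "level x ?\<tau> = s" using inv(2) cd T by simp
  have "?\<tau> \<in> {c..d}" using inv(1) cd T by simp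
  then show "?\<tau> \<in> {0..T}"
    using mono[of ?\<tau> 0] mono[of T ?\<tau>] \<tau> assms T cd level_0 by (force simp: not_le)
  show "(inv_into {c..d} (level x) has_real_derivative inverse (1 + (slope s (\<xi> ?\<tau> x))\<^sup>2)) (at s)"
    using inv(3) cd T \<tau> by simp
qed

lemma first_time_eq_level_inverse:
  assumes s: "s \<in> {0..1}"
  shows "t\<^sub>0 s x = inv_into {c..d} (level x) s"
proof (rule first_time_eqI)
  let ?\<tau> = "inv_into {c..d} (level x) s"
  have \<tau>: "?\<tau> \<in> {0..T}" "level x ?\<tau> = s" using level_inverse[OF s] by auto
  then show "0 \<le> ?\<tau>" by simp
  show "\<eta> ?\<tau> x = w (\<xi> ?\<tau> x) + s * \<phi> (\<xi> ?\<tau> x)"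
    using \<tau> cd T by (subst reaches_level_iff) auto
  fix t assume t: "0 \<le> t" "t < ?\<tau>"
  then have "level x t < s"
    using level_strict_mono_on \<tau> cd T by (auto dest!: strict_mono_onD[of _ _ t ?\<tau>])
  then show "\<eta> t x \<noteq> w (\<xi> t x) + s * \<phi> (\<xi> t x)"
    using t \<tau> cd T by (subst reaches_level_iff) auto
qed

lemma position_at_first_time_has_derivative:
  assumes s: "s \<in> {0..1}"
  shows "((\<lambda>s. \<xi> (t\<^sub>0 s x) x) has_real_derivative field s (\<xi> (t\<^sub>0 s x) x)) (at s within {0..1})"
proof -
  let ?\<tau> = "inv_into {c..d} (level x) s"
  have \<tau>: "?\<tau> \<in> {0..T}" "level x ?\<tau> = s" using level_inverse[OF s] by auto
  have "((\<lambda>s. \<xi> (inv_into {c..d} (level x) s) x) has_real_derivative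
      xi_speed x ?\<tau> * inverse (1 + (slope s (\<xi> ?\<tau> x))\<^sup>2)) (at s)"
    by (rule DERIV_chain2[OF has_derivative_xi_speed level_inverse(3)[OF s]])
  moreover have "xi_speed x ?\<tau> * inverse (1 + (slope s (\<xi> ?\<tau> x))\<^sup>2) = field s (\<xi> ?\<tau> x)"
    using \<tau> cd T
    by (simp add: xi_speed_eq field_def psi_def phi_along_def divide_inverse)
  ultimately have "((\<lambda>s. \<xi> (inv_into {c..d} (level x) s) x) has_real_derivative field s (\<xi> (t\<^sub>0 s x) x))
      (at s within {0..1})"
    using first_time_eq_level_inverse[OF s] by (simp add: has_field_derivative_at_within)
  then show ?thesis
    by (rule has_field_derivative_transform_within[OF _ zero_less_one s])
       (simp add: first_time_eq_level_inverse)
qed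

end

lemma position_at_first_time:
  assumes s: "s \<in> {0..1}"
  shows "((\<lambda>s. \<xi> (t\<^sub>0 s x) x) has_real_derivative field s (\<xi> (t\<^sub>0 s x) x)) (at s within {0..1})"
    and "\<eta> (t\<^sub>0 s x) x = w (\<xi> (t\<^sub>0 s x) x) + s * \<phi> (\<xi> (t\<^sub>0 s x) x)"
proof -
  have "((\<lambda>s. \<xi> (t\<^sub>0 s x) x) has_real_derivative field s (\<xi> (t\<^sub>0 s x) x)) (at s within {0..1})
    \<and> \<eta> (t\<^sub>0 s x) x = w (\<xi> (t\<^sub>0 s x) x) + s * \<phi> (\<xi> (t\<^sub>0 s x) x)"
  proof (cases "\<phi> x = 0")
    case True
    then have "t\<^sub>0 s x = 0" for s by (intro first_time_eqI) (use initial_values in auto)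
    moreover have "field s x = 0" for s using True by (simp add: field_def phi_eq_phi_deriv_0)
    ultimately show ?thesis using True initial_values by simp
  next
    case False
    then obtain T where T: "0 < T" "T \<le> 1" "\<And>t. t \<in> {0..T} \<Longrightarrow> phi_along x t \<noteq> 0" "level x T = 1"
      using exists_level_one[OF False] by blast
    have "open {t. phi_along x t \<noteq> 0}"
      by (intro open_Collect_neq continuous_on_phi_along continuous_intros)
    moreover have "{0..T} \<subseteq> {t. phi_along x t \<noteq> 0}" using T(3) by blast
    ultimately obtain c d where cd: "c < 0" "T < d" "{c..d} \<subseteq> {t. phi_along x t \<noteq> 0}"
      using open_contains_larger_Icc T(1) by (metis less_imp_le)
    then have cd: "c < 0" "T < d" "\<And>t. t \<in> {c..d} \<Longrightarrow> phi_along x t \<noteq> 0" by auto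
    have "\<tau> \<in> {0..T}" "level x \<tau> = s" if "\<tau> = t\<^sub>0 s x" for \<tau>
      using level_inverse[OF T(1,4) cd s] first_time_eq_level_inverse[OF T(1,4) cd s] that by auto
    then show ?thesis
      using position_at_first_time_has_derivative[OF T(1,4) cd s] reaches_level_iff[of x "t\<^sub>0 s x" s] T(3)
      by auto
  qed
  then show "((\<lambda>s. \<xi> (t\<^sub>0 s x) x) has_real_derivative field s (\<xi> (t\<^sub>0 s x) x)) (at s within {0..1})"
    and "\<eta> (t\<^sub>0 s x) x = w (\<xi> (t\<^sub>0 s x) x) + s * \<phi> (\<xi> (t\<^sub>0 s x) x)" by auto
qed

lemma scalar_flow_at_first_time:
  obtains M L K where "scalar_flow field field_s field_v field_vv (\<lambda>s x. \<xi> (t\<^sub>0 s x) x) M L K"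
proof (rule scalar_flow_of_field)
  show "\<xi> (t\<^sub>0 0 x) x = x" for x
    using first_time_eqI[of 0 \<eta> x w \<xi> 0 \<phi>] initial_values by simp
qed (use position_at_first_time(1) that in blast)+

lemma C2_on_position_at_first_time: "C2_on (\<lambda>(s, x). \<xi> (t\<^sub>0 s x) x) strip"
proof -
  obtain M L K where "scalar_flow field field_s field_v field_vv (\<lambda>s x. \<xi> (t\<^sub>0 s x) x) M L K"
    by (rule scalar_flow_at_first_time)
  then interpret scalar_flow field field_s field_v field_vv "\<lambda>s x. \<xi> (t\<^sub>0 s x) x" M L K .
  show ?thesis using C2_on_flow by (simp add: case_prod_beta')
qed

lemma C2_on_height_at_first_time: "C2_on (\<lambda>(s, x). \<eta> (t\<^sub>0 s x) x) strip"
proof -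
  obtain M L K where "scalar_flow field field_s field_v field_vv (\<lambda>s x. \<xi> (t\<^sub>0 s x) x) M L K"
    by (rule scalar_flow_at_first_time)
  then interpret scalar_flow field field_s field_v field_vv "\<lambda>s x. \<xi> (t\<^sub>0 s x) x" M L K .
  have phi_deriv_continuous': "continuous_on UNIV (phi_deriv 1)" "continuous_on UNIV (phi_deriv 2)"
    by (simp_all add: phi_deriv_continuous)
  note Y = C1_partials_on_flow and Y\<^sub>s = C1_partials_on_flow_velocity and Y\<^sub>x = C1_partials_on_variation
  note phi_Y = C1_partials_on_compose[OF phi_deriv_has_derivative(1) phi_deriv_continuous'(1) Y]
  note phi'_Y = C1_partials_on_compose[OF phi_deriv_has_derivative(2) phi_deriv_continuous'(2) Y]
  note w'_Y = C1_partials_on_compose[OF w'_has_derivative w''_continuous Y]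
  note h = C1_partials_on_add[OF C1_partials_on_compose[OF w_has_derivative w'_continuous Y]
      C1_partials_on_mult[OF C1_partials_on_fst phi_Y]]
  note h\<^sub>s = C1_partials_on_add[OF C1_partials_on_mult[OF w'_Y Y\<^sub>s]
      C1_partials_on_add[OF C1_partials_on_mult[OF C1_partials_on_const[of _ 1] phi_Y]
        C1_partials_on_mult[OF C1_partials_on_fst C1_partials_on_mult[OF phi'_Y Y\<^sub>s]]]]
  note h\<^sub>x = C1_partials_on_add[OF C1_partials_on_mult[OF w'_Y Y\<^sub>x]
      C1_partials_on_add[OF C1_partials_on_mult[OF C1_partials_on_const[of _ 0] phi_Y]
        C1_partials_on_mult[OF C1_partials_on_fst C1_partials_on_mult[OF phi'_Y Y\<^sub>x]]]]
  have "(\<lambda>(s, x). \<eta> (t\<^sub>0 s x) x) p = w (Y p) + fst p * phi_deriv 0 (Y p)" if "p \<in> strip" for p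
    using position_at_first_time(2) that by (auto simp: phi_eq_phi_deriv_0)
  from C1_partials_on_cong[OF h this] show ?thesis
    by (rule C2_on_if_C1_partials_on[OF _ h\<^sub>s h\<^sub>x])
qed

end

theorem theorem3p5:
  fixes w :: "real \<Rightarrow> real" and a b :: real and p :: "real poly"
    and \<phi> :: "real \<Rightarrow> real" and \<xi> \<eta> :: "real \<Rightarrow> real \<Rightarrow> real"
  assumes w_C3: "Ck_real 3 w"
    and w_periodic: "\<exists>T>0. \<forall>x. w (x + T) = w x"
    and w_pos: "\<forall>x\<in>{-1..1}. w x > 0"
    and ab: "-1 < a" "a < b" "b < 1"
    and phi_def: "\<forall>x. \<phi> x = (if x \<in> {a..b} then poly p x else 0)"
    and phi_bd: "\<forall>k\<le>3. poly ((pderiv ^^ k) p) a = 0 \<and> poly ((pderiv ^^ k) p) b = 0"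
    and sol_xi: "\<forall>x t. ((\<lambda>\<tau>. \<xi> \<tau> x) has_real_derivative
                 (- deriv w (\<xi> t x) * \<phi> (\<xi> t x) - (\<eta> t x - w (\<xi> t x)) * deriv \<phi> (\<xi> t x))) (at t)"
    and sol_eta: "\<forall>x t. ((\<lambda>\<tau>. \<eta> \<tau> x) has_real_derivative \<phi> (\<xi> t x)) (at t)"
    and init: "\<forall>x. \<xi> 0 x = x \<and> \<eta> 0 x = w x"
  shows "C2_on (\<lambda>(s, x). \<xi> (first_time \<xi> \<eta> w \<phi> s x) x) ({0..1} \<times> UNIV)
       \<and> (\<forall>s\<in>{0..1}. \<forall>x. \<eta> (first_time \<xi> \<eta> w \<phi> s x) x
              = w (\<xi> (first_time \<xi> \<eta> w \<phi> s x) x) + s * \<phi> (\<xi> (first_time \<xi> \<eta> w \<phi> s x) x))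
       \<and> C2_on (\<lambda>(s, x). \<eta> (first_time \<xi> \<eta> w \<phi> s x) x) ({0..1} \<times> UNIV)"
proof -
  interpret bump_characteristics w a b p \<phi> \<xi> \<eta>
    by unfold_locales (use w_C3 ab phi_def phi_bd sol_xi sol_eta init in auto)
  show ?thesis
    using C2_on_position_at_first_time position_at_first_time(2) C2_on_height_at_first_time by blast
qed

end
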